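(* Let $C>0$ and $n\geq\mathrm{e}^{C/8}M\log M$, and draw the entries of an $M\times n$ matrix $\Phi=\{\varphi_i\}_{i=1}^n$ independently from $\mathbb{C}\mathcal{N}(0,\frac1M)$. Let $\beta:=3\mathrm{e}^{-C/8}$. Then with overwhelming probability, \[ \#\Big\{i:\ |\langle x,\varphi_i\rangle|^2>\frac{C}{M}\Big\}<\beta n \] for every unit-norm $x\in\mathbb{C}^M$.
   Context: $\mathbb{C}\mathcal{N}(0,\sigma^2)$ is the complex Gaussian with independent $\mathcal{N}(0,\sigma^2/2)$ real and imaginary parts. "With overwhelming probability" means with probability tending to $1$ exponentially fast as $M\to\infty$ (probability at least $1-c_0\mathrm{e}^{-c_1M}$ for constants $c_0,c_1>0$). *)

theory Defs
  imports "HOL-Probability.Probability"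
begin

text \<open>Complex Gaussian CN(0, s2): independent real and imaginary parts, each N(0, s2/2).
  normal_density mu sigma uses the standard deviation sigma.\<close>
definition complex_gaussian :: "real \<Rightarrow> complex measure" where
  "complex_gaussian s2 =
     distr (density lborel (normal_density 0 (sqrt (s2 / 2))) \<Otimes>\<^sub>M
            density lborel (normal_density 0 (sqrt (s2 / 2))))
           borel (\<lambda>(a, b). Complex a b)"

text \<open>Random M x n matrix Phi with i.i.d. CN(0, 1/M) entries; entry (j, i) is the
  j-th coordinate of the column phi_i, j < M, i < n.\<close>
definition gaussian_matrix :: "nat \<Rightarrow> nat \<Rightarrow> (nat \<times> nat \<Rightarrow> complex) measure" where
  "gaussian_matrix M n = (\<Pi>\<^sub>M p \<in> {0..<M} \<times> {0..<n}. complex_gaussian (1 / real M))"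

definition col_inner :: "nat \<Rightarrow> (nat \<Rightarrow> complex) \<Rightarrow> (nat \<times> nat \<Rightarrow> complex) \<Rightarrow> nat \<Rightarrow> complex" where
  "col_inner M x Phi i = (\<Sum>j<M. x j * cnj (Phi (j, i)))"

end

theory Submission
  imports Defs
begin

text \<open>For a fixed vector \<open>y\<close> and a fixed set \<open>S\<close> of \<open>k\<close> columns, the moment generating
  function of \<open>\<Sum>i\<in>S. |\<langle>y, \<phi>\<^sub>i\<rangle>|\<^sup>2\<close> is \<open>(1 - \<lambda> |y|\<^sup>2 / M) ^ (-k)\<close>: writing \<open>exp (\<lambda> |z|\<^sup>2)\<close>
  as a Gaussian average of \<open>exp (Re (2 sqrt \<lambda> z cnj w))\<close> makes the exponent linear in the
  entries of \<open>\<Phi>\<close>, and the two integrations can be exchanged. A Chernoff bound then shows that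
  \<open>\<Sum>i\<in>S. |\<langle>y, \<phi>\<^sub>i\<rangle>|\<^sup>2 \<ge> (39/40)\<^sup>2 k C / M\<close> has probability at most \<open>2 ^ k exp (-3 k C / 8)\<close>.
  If some unit vector \<open>x\<close> had \<open>k = \<lceil>\<beta> n\<rceil>\<close> coefficients with \<open>|\<langle>x, \<phi>\<^sub>i\<rangle>|\<^sup>2 > C / M\<close>, then, as
  the Euclidean norm of \<open>(\<langle>x, \<phi>\<^sub>i\<rangle>)\<close>, \<open>i \<in> S\<close>, is a seminorm in \<open>x\<close>, some point \<open>y\<close> of a \<open>1/40\<close>-net of
  the sphere of size \<open>(121 M) ^ (2 M)\<close> would satisfy that inequality. A union bound over the net
  and the \<open>(n choose k) \<le> (e n / k) ^ k\<close> sets \<open>S\<close> leaves \<open>(121 M) ^ (2 M) exp (-k)\<close>, and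
  \<open>k \<ge> 3 M ln M\<close> makes this at most \<open>exp (-M)\<close> for \<open>M \<ge> 50000\<close>; smaller \<open>M\<close> are absorbed
  into the constant.\<close>

section \<open>Gaussian moment generating functions\<close>

lemma nn_integral_normal_density:
  assumes "\<sigma> > 0"
  shows "(\<integral>\<^sup>+x. ennreal (normal_density \<mu> \<sigma> x) \<partial>lborel) = 1"
proof -
  have "(\<integral>\<^sup>+x. ennreal (normal_density \<mu> \<sigma> x) \<partial>lborel) = ennreal (\<integral>x. normal_density \<mu> \<sigma> x \<partial>lborel)"
    by (rule nn_integral_eq_integral) (auto intro: integrable_normal_density assms)
  also have "(\<integral>x. normal_density \<mu> \<sigma> x \<partial>lborel) = 1"
    using integral_normal_moment_even[of \<sigma> \<mu> 0] assms by simp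
  finally show ?thesis by simp
qed

lemma normal_mgf:
  assumes "\<sigma> > 0"
  shows "(\<integral>\<^sup>+x. ennreal (normal_density 0 \<sigma> x * exp (t * x)) \<partial>lborel) = ennreal (exp (t\<^sup>2 * \<sigma>\<^sup>2 / 2))"
proof -
  have shift: "normal_density 0 \<sigma> x * exp (t * x) = exp (t\<^sup>2 * \<sigma>\<^sup>2 / 2) * normal_density (t * \<sigma>\<^sup>2) \<sigma> x" for x
  proof -
    have "-(x - 0)\<^sup>2/ (2 * \<sigma>\<^sup>2) + t * x = t\<^sup>2 * \<sigma>\<^sup>2 / 2 + (-(x - t * \<sigma>\<^sup>2)\<^sup>2/ (2 * \<sigma>\<^sup>2))"
      using assms by (simp add: field_simps power2_eq_square)
    then show ?thesis unfolding normal_density_def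
      by (simp add: exp_add[symmetric] mult_ac)
  qed
  show ?thesis
    by (simp add: shift ennreal_mult nn_integral_cmult nn_integral_normal_density assms)
qed

lemma normal_mgf_sq:
  assumes "\<sigma> > 0" "2 * a * \<sigma>\<^sup>2 < 1"
  shows "(\<integral>\<^sup>+x. ennreal (normal_density 0 \<sigma> x * exp (a * x\<^sup>2)) \<partial>lborel)
    = ennreal (1 / sqrt (1 - 2 * a * \<sigma>\<^sup>2))"
proof -
  define \<tau> where "\<tau> = \<sigma> / sqrt (1 - 2 * a * \<sigma>\<^sup>2)"
  have q: "1 - 2 * a * \<sigma>\<^sup>2 > 0" using assms by simp
  have \<tau>_pos: "\<tau> > 0" using assms q unfolding \<tau>_def by simp
  have \<tau>_sq: "\<tau>\<^sup>2 = \<sigma>\<^sup>2 / (1 - 2 * a * \<sigma>\<^sup>2)" unfolding \<tau>_def using q by (simp add: power_divide)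
  have rescale: "normal_density 0 \<sigma> x * exp (a * x\<^sup>2)
      = (1 / sqrt (1 - 2 * a * \<sigma>\<^sup>2)) * normal_density 0 \<tau> x" for x
  proof -
    have e: "-(x - 0)\<^sup>2/ (2 * \<sigma>\<^sup>2) + a * x\<^sup>2 = -(x - 0)\<^sup>2/ (2 * \<tau>\<^sup>2)"
      using assms q unfolding \<tau>_sq by (simp add: field_simps)
    have p: "1 / sqrt (2 * pi * \<sigma>\<^sup>2) = (1 / sqrt (1 - 2 * a * \<sigma>\<^sup>2)) * (1 / sqrt (2 * pi * \<tau>\<^sup>2))"
      unfolding \<tau>_sq using q assms by (simp add: real_sqrt_divide real_sqrt_mult field_simps)
    have "normal_density 0 \<sigma> x * exp (a * x\<^sup>2)
        = 1 / sqrt (2 * pi * \<sigma>\<^sup>2) * exp (-(x - 0)\<^sup>2/ (2 * \<sigma>\<^sup>2) + a * x\<^sup>2)"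
      unfolding normal_density_def by (simp add: mult_exp_exp algebra_simps)
    also have "\<dots> = (1 / sqrt (1 - 2 * a * \<sigma>\<^sup>2)) * (1 / sqrt (2 * pi * \<tau>\<^sup>2) * exp (-(x - 0)\<^sup>2/ (2 * \<tau>\<^sup>2)))"
      unfolding p e by (simp only: mult.assoc)
    finally show ?thesis unfolding normal_density_def .
  qed
  have "(\<integral>\<^sup>+x. ennreal (normal_density 0 \<sigma> x * exp (a * x\<^sup>2)) \<partial>lborel)
     = (\<integral>\<^sup>+x. ennreal (1 / sqrt (1 - 2 * a * \<sigma>\<^sup>2)) * ennreal (normal_density 0 \<tau> x) \<partial>lborel)"
    using q by (intro nn_integral_cong, subst ennreal_mult[symmetric]) (auto simp: rescale)
  also have "\<dots> = ennreal (1 / sqrt (1 - 2 * a * \<sigma>\<^sup>2))"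
    by (subst nn_integral_cmult)
      (auto simp only: nn_integral_normal_density[OF \<tau>_pos] mult_1_right, measurable)
  finally show ?thesis .
qed

lemma borel_measurable_Complex[measurable]:
  assumes [measurable]: "f \<in> borel_measurable M" "g \<in> borel_measurable M"
  shows "(\<lambda>x. Complex (f x) (g x)) \<in> borel_measurable M"
  unfolding Complex_eq by measurable

lemma borel_measurable_cnj[measurable]:
  assumes [measurable]: "f \<in> borel_measurable M"
  shows "(\<lambda>x. cnj (f x)) \<in> borel_measurable M"
proof -
  have "(\<lambda>x. cnj (f x)) = (\<lambda>x. Complex (Re (f x)) (- Im (f x)))" by (auto simp: complex_eq_iff)
  then show ?thesis by simp
qed

lemma sets_complex_gaussian[measurable_cong, simp]: "sets (complex_gaussian s) = sets borel"
  by (simp add: complex_gaussian_def)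

lemma prob_space_complex_gaussian:
  assumes "s > 0"
  shows "prob_space (complex_gaussian s)"
proof -
  define N where "N = density lborel (normal_density 0 (sqrt (s/2)))"
  interpret N: prob_space N unfolding N_def by (rule prob_space_normal_density) (use assms in simp)
  interpret P: pair_prob_space N N by unfold_locales
  have [measurable_cong]: "sets N = sets borel" by (simp add: N_def)
  show ?thesis unfolding complex_gaussian_def N_def[symmetric]
    by (rule P.prob_space_distr) measurable
qed

lemma prob_space_gaussian_matrix:
  assumes "M > 0"
  shows "prob_space (gaussian_matrix M n)"
  unfolding gaussian_matrix_def
  by (intro prob_space_PiM prob_space_complex_gaussian) (use assms in simp)

lemma nn_integral_complex_gaussian_Re_Im:
  fixes f g :: "real \<Rightarrow> real"
  assumes [measurable]: "f \<in> borel_measurable borel" "g \<in> borel_measurable borel"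
    and "\<And>x. f x \<ge> 0" "\<And>x. g x \<ge> 0" and "s > 0"
  shows "(\<integral>\<^sup>+z. ennreal (f (Re z) * g (Im z)) \<partial>complex_gaussian s)
    = (\<integral>\<^sup>+x. ennreal (normal_density 0 (sqrt (s/2)) x * f x) \<partial>lborel) *
      (\<integral>\<^sup>+y. ennreal (normal_density 0 (sqrt (s/2)) y * g y) \<partial>lborel)"
proof -
  define N where "N = density lborel (normal_density 0 (sqrt (s/2)))"
  interpret N: prob_space N unfolding N_def by (rule prob_space_normal_density) (use assms in simp)
  interpret P: pair_sigma_finite N N by standard
  have [measurable_cong]: "sets N = sets borel" by (simp add: N_def)
  have "(\<integral>\<^sup>+z. ennreal (f (Re z) * g (Im z)) \<partial>complex_gaussian s)
     = (\<integral>\<^sup>+p. ennreal (f (fst p) * g (snd p)) \<partial>(N \<Otimes>\<^sub>M N))"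
    unfolding complex_gaussian_def N_def[symmetric]
    by (subst nn_integral_distr) (auto intro!: nn_integral_cong simp: case_prod_beta', measurable)
  also have "\<dots> = (\<integral>\<^sup>+x. (\<integral>\<^sup>+y. ennreal (f x * g y) \<partial>N) \<partial>N)"
    by (subst N.nn_integral_fst[symmetric]) auto
  also have "\<dots> = (\<integral>\<^sup>+x. ennreal (f x) * (\<integral>\<^sup>+y. ennreal (g y) \<partial>N) \<partial>N)"
    by (intro nn_integral_cong, subst nn_integral_cmult[symmetric]) (auto simp: ennreal_mult assms)
  also have "\<dots> = (\<integral>\<^sup>+x. ennreal (f x) \<partial>N) * (\<integral>\<^sup>+y. ennreal (g y) \<partial>N)"
    by (subst nn_integral_multc) auto
  also have "\<dots> = (\<integral>\<^sup>+x. ennreal (normal_density 0 (sqrt (s/2)) x * f x) \<partial>lborel) *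
      (\<integral>\<^sup>+y. ennreal (normal_density 0 (sqrt (s/2)) y * g y) \<partial>lborel)"
    unfolding N_def
    by (subst (1 2) nn_integral_density)
      (auto simp: ennreal_mult assms intro!: arg_cong2[where f="(*)"] nn_integral_cong)
  finally show ?thesis .
qed

lemma complex_gaussian_mgf_linear:
  assumes "s > 0"
  shows "(\<integral>\<^sup>+z. ennreal (exp (Re (c * cnj z))) \<partial>complex_gaussian s) = ennreal (exp (s * (cmod c)\<^sup>2 / 4))"
proof -
  have \<sigma>_pos: "sqrt (s/2) > 0" using assms by simp
  have "(\<integral>\<^sup>+z. ennreal (exp (Re (c * cnj z))) \<partial>complex_gaussian s)
      = (\<integral>\<^sup>+z. ennreal (exp (Re c * Re z) * exp (Im c * Im z)) \<partial>complex_gaussian s)"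
    by (intro nn_integral_cong) (simp add: exp_add[symmetric])
  also have "\<dots> = ennreal (exp ((Re c)\<^sup>2 * (sqrt (s/2))\<^sup>2 / 2)) * ennreal (exp ((Im c)\<^sup>2 * (sqrt (s/2))\<^sup>2 / 2))"
    by (subst nn_integral_complex_gaussian_Re_Im) (auto simp: normal_mgf[OF \<sigma>_pos] assms)
  also have "\<dots> = ennreal (exp (s * (cmod c)\<^sup>2 / 4))"
    using assms by (simp add: ennreal_mult[symmetric] exp_add[symmetric] cmod_power2 field_simps)
  finally show ?thesis .
qed

lemma complex_gaussian_mgf_sq:
  assumes "a < 1"
  shows "(\<integral>\<^sup>+z. ennreal (exp (a * (cmod z)\<^sup>2)) \<partial>complex_gaussian 1) = ennreal (1 / (1 - a))"
proof -
  have \<sigma>_pos: "sqrt (1/2) > (0::real)" by simp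
  have a: "2 * a * (sqrt (1/2))\<^sup>2 < 1" using assms by simp
  have "(\<integral>\<^sup>+z. ennreal (exp (a * (cmod z)\<^sup>2)) \<partial>complex_gaussian 1)
      = (\<integral>\<^sup>+z. ennreal (exp (a * (Re z)\<^sup>2) * exp (a * (Im z)\<^sup>2)) \<partial>complex_gaussian 1)"
    by (intro nn_integral_cong) (simp add: exp_add[symmetric] cmod_power2 algebra_simps)
  also have "\<dots> = ennreal (1 / sqrt (1 - 2 * a * (sqrt (1/2))\<^sup>2)) * ennreal (1 / sqrt (1 - 2 * a * (sqrt (1/2))\<^sup>2))"
    by (subst nn_integral_complex_gaussian_Re_Im) (auto simp: normal_mgf_sq[OF \<sigma>_pos a])
  also have "\<dots> = ennreal (1 / (1 - a))"
    using assms by (simp add: ennreal_mult[symmetric])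
  finally show ?thesis .
qed

section \<open>The moment generating function of column energies\<close>

lemma prod_grid_if_snd_in:
  fixes g :: "nat \<times> nat \<Rightarrow> real"
  assumes "S \<subseteq> {0..<n}"
  shows "(\<Prod>p\<in>{0..<M}\<times>{0..<n}. (if snd p \<in> S then g p else 1)) = (\<Prod>i\<in>S. \<Prod>j<M. g (j, i))"
proof -
  have "(\<Prod>p\<in>{0..<M}\<times>{0..<n}. (if snd p \<in> S then g p else 1))
      = (\<Prod>i\<in>{0..<n}. \<Prod>j\<in>{0..<M}. (if i \<in> S then g (j,i) else 1))"
    by (subst prod.swap) (auto simp: prod.cartesian_product intro!: prod.cong)
  also have "\<dots> = (\<Prod>i\<in>{0..<n}. (if i \<in> S then (\<Prod>j\<in>{0..<M}. g (j,i)) else 1))"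
    by (intro prod.cong) auto
  also have "\<dots> = (\<Prod>i\<in>S. (\<Prod>j\<in>{0..<M}. g (j,i)))"
    using assms by (simp add: prod.If_cases Int_absorb1)
  finally show ?thesis by (simp add: lessThan_atLeast0)
qed

lemma measurable_gaussian_matrix_entry:
  assumes "j < M" "i < n"
  shows "(\<lambda>\<Phi>. \<Phi> (j, i)) \<in> borel_measurable (gaussian_matrix M n)"
proof -
  have "(\<lambda>\<Phi>. \<Phi> (j, i)) \<in> measurable (gaussian_matrix M n) (complex_gaussian (1/real M))"
    unfolding gaussian_matrix_def using assms by (intro measurable_component_singleton) auto
  then show ?thesis by (subst (asm) measurable_cong_sets[OF refl sets_complex_gaussian])
qed

lemma borel_measurable_col_inner[measurable]:
  assumes "i < n"
  shows "(\<lambda>\<Phi>. col_inner M y \<Phi> i) \<in> borel_measurable (gaussian_matrix M n)"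
proof -
  have [measurable]: "j \<in> {..<M} \<Longrightarrow> (\<lambda>\<Phi>. \<Phi> (j, i)) \<in> borel_measurable (gaussian_matrix M n)" for j
    using assms by (intro measurable_gaussian_matrix_entry) auto
  show ?thesis unfolding col_inner_def by measurable
qed

lemma borel_measurable_col_energy[measurable]:
  assumes "S \<subseteq> {0..<n}"
  shows "(\<lambda>\<Phi>. \<Sum>i\<in>S. (cmod (col_inner M y \<Phi> i))\<^sup>2) \<in> borel_measurable (gaussian_matrix M n)"
  using assms by (intro borel_measurable_sum) (auto intro!: borel_measurable_power borel_measurable_norm)

text \<open>The Gaussian linearisation (Hubbard--Stratonovich) of \<open>exp (\<lambda> |a|\<^sup>2)\<close>.\<close>

lemma exp_sum_cmod_sq_eq_gaussian_average:
  fixes a :: "'i \<Rightarrow> complex"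
  assumes "finite S" "lam \<ge> 0"
  shows "ennreal (exp (lam * (\<Sum>i\<in>S. (cmod (a i))\<^sup>2)))
    = (\<integral>\<^sup>+W. (\<Prod>i\<in>S. ennreal (exp (Re (complex_of_real (2 * sqrt lam) * a i * cnj (W i)))))
        \<partial>PiM S (\<lambda>_. complex_gaussian 1))"
proof -
  interpret product_sigma_finite "\<lambda>_::'i. complex_gaussian 1"
    by (simp add: product_sigma_finite_def prob_space_imp_sigma_finite prob_space_complex_gaussian)
  have "(\<integral>\<^sup>+W. (\<Prod>i\<in>S. ennreal (exp (Re (complex_of_real (2 * sqrt lam) * a i * cnj (W i)))))
        \<partial>PiM S (\<lambda>_. complex_gaussian 1))
      = (\<Prod>i\<in>S. \<integral>\<^sup>+w. ennreal (exp (Re (complex_of_real (2 * sqrt lam) * a i * cnj w))) \<partial>complex_gaussian 1)"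
    by (rule product_nn_integral_prod) (auto simp: assms)
  also have "\<dots> = (\<Prod>i\<in>S. ennreal (exp (lam * (cmod (a i))\<^sup>2)))"
  proof (intro prod.cong refl)
    fix i
    have "(cmod (complex_of_real (2 * sqrt lam) * a i))\<^sup>2 = 4 * lam * (cmod (a i))\<^sup>2"
      using assms by (simp add: norm_mult power_mult_distrib)
    then show "(\<integral>\<^sup>+w. ennreal (exp (Re (complex_of_real (2 * sqrt lam) * a i * cnj w))) \<partial>complex_gaussian 1)
        = ennreal (exp (lam * (cmod (a i))\<^sup>2))"
      by (subst complex_gaussian_mgf_linear) auto
  qed
  also have "\<dots> = ennreal (exp (lam * (\<Sum>i\<in>S. (cmod (a i))\<^sup>2)))"
    by (simp add: prod_ennreal exp_sum assms sum_distrib_left)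
  finally show ?thesis by simp
qed

lemma gaussian_matrix_mgf_linear:
  assumes M: "M > 0" and S: "S \<subseteq> {0..<n}"
  shows "(\<integral>\<^sup>+\<Phi>. (\<Prod>i\<in>S. ennreal (exp (Re (c * col_inner M y \<Phi> i * cnj (W i))))) \<partial>gaussian_matrix M n)
    = ennreal (\<Prod>i\<in>S. exp ((cmod c)\<^sup>2 / 4 * (\<Sum>j<M. (cmod (y j))\<^sup>2) / M * (cmod (W i))\<^sup>2))"
proof -
  define I where "I = {0..<M} \<times> {0..<n}"
  define v where "v = (\<lambda>p. c * y (fst p) * cnj (W (snd p)))"
  define h where "h = (\<lambda>p \<phi>. ennreal (if snd p \<in> S then exp (Re (v p * cnj \<phi>)) else 1))"
  have psM: "prob_space (complex_gaussian (1 / real M))"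
    by (rule prob_space_complex_gaussian) (use M in simp)
  interpret product_sigma_finite "\<lambda>_::nat\<times>nat. complex_gaussian (1 / real M)"
    by (simp add: product_sigma_finite_def prob_space_imp_sigma_finite psM)
  have factor: "(\<Prod>i\<in>S. ennreal (exp (Re (c * col_inner M y \<Phi> i * cnj (W i))))) = (\<Prod>p\<in>I. h p (\<Phi> p))"
    for \<Phi>
  proof -
    define g where "g = (\<lambda>p. exp (Re (v p * cnj (\<Phi> p))))"
    have "c * col_inner M y \<Phi> i * cnj (W i) = (\<Sum>j<M. v (j, i) * cnj (\<Phi> (j, i)))" for i
      unfolding col_inner_def v_def by (simp add: sum_distrib_left sum_distrib_right mult_ac)
    then have entries: "exp (Re (c * col_inner M y \<Phi> i * cnj (W i))) = (\<Prod>j<M. g (j, i))" for i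
      unfolding g_def by (simp add: Re_sum exp_sum)
    have "(\<Prod>i\<in>S. ennreal (exp (Re (c * col_inner M y \<Phi> i * cnj (W i))))) = ennreal (\<Prod>i\<in>S. \<Prod>j<M. g (j, i))"
      unfolding entries by (rule prod_ennreal) (simp add: g_def prod_nonneg)
    also have "\<dots> = ennreal (\<Prod>p\<in>I. (if snd p \<in> S then g p else 1))"
      unfolding I_def by (simp add: prod_grid_if_snd_in[OF S])
    also have "\<dots> = (\<Prod>p\<in>I. h p (\<Phi> p))"
      unfolding h_def g_def by (subst prod_ennreal[symmetric]) (auto intro!: prod.cong)
    finally show ?thesis .
  qed
  have entry_mgf: "(\<integral>\<^sup>+\<phi>. h p \<phi> \<partial>complex_gaussian (1 / real M))
      = ennreal (if snd p \<in> S then exp ((cmod (v p))\<^sup>2 / (4 * M)) else 1)" for p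
  proof (cases "snd p \<in> S")
    case True
    have "(\<integral>\<^sup>+\<phi>. h p \<phi> \<partial>complex_gaussian (1 / real M))
        = (\<integral>\<^sup>+\<phi>. ennreal (exp (Re (v p * cnj \<phi>))) \<partial>complex_gaussian (1 / real M))"
      by (simp only: h_def if_P[OF True])
    also have "\<dots> = ennreal (exp (1 / real M * (cmod (v p))\<^sup>2 / 4))"
      by (rule complex_gaussian_mgf_linear) (use M in simp)
    finally show ?thesis using True by simp
  next
    case False
    then show ?thesis unfolding h_def using prob_space.emeasure_space_1[OF psM] by simp
  qed
  have "(\<integral>\<^sup>+\<Phi>. (\<Prod>i\<in>S. ennreal (exp (Re (c * col_inner M y \<Phi> i * cnj (W i))))) \<partial>gaussian_matrix M n)
      = (\<Prod>p\<in>I. \<integral>\<^sup>+\<phi>. h p \<phi> \<partial>complex_gaussian (1 / real M))"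
    unfolding factor gaussian_matrix_def I_def by (rule product_nn_integral_prod) (auto simp: h_def)
  also have "\<dots> = ennreal (\<Prod>p\<in>I. (if snd p \<in> S then exp ((cmod (v p))\<^sup>2 / (4 * M)) else 1))"
    unfolding entry_mgf by (rule prod_ennreal) simp
  also have "\<dots> = ennreal (\<Prod>i\<in>S. \<Prod>j<M. exp ((cmod c)\<^sup>2 * (cmod (y j))\<^sup>2 * (cmod (W i))\<^sup>2 / (4 * M)))"
    unfolding I_def prod_grid_if_snd_in[OF S] v_def by (simp add: norm_mult power_mult_distrib)
  also have "\<dots> = ennreal (\<Prod>i\<in>S. exp ((cmod c)\<^sup>2 / 4 * (\<Sum>j<M. (cmod (y j))\<^sup>2) / M * (cmod (W i))\<^sup>2))"
    by (simp add: exp_sum[symmetric] sum_divide_distrib[symmetric] sum_distrib_left[symmetric]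
        sum_distrib_right[symmetric] mult_ac)
  finally show ?thesis .
qed

lemma product_complex_gaussian_mgf_sq:
  fixes S :: "'i set"
  assumes "finite S" "a < 1"
  shows "(\<integral>\<^sup>+W. ennreal (\<Prod>i\<in>S. exp (a * (cmod (W i))\<^sup>2)) \<partial>PiM S (\<lambda>_. complex_gaussian 1))
    = ennreal ((1 / (1 - a)) ^ card S)"
proof -
  interpret product_sigma_finite "\<lambda>_::'i. complex_gaussian 1"
    by (simp add: product_sigma_finite_def prob_space_imp_sigma_finite prob_space_complex_gaussian)
  have "(\<integral>\<^sup>+W. ennreal (\<Prod>i\<in>S. exp (a * (cmod (W i))\<^sup>2)) \<partial>PiM S (\<lambda>_. complex_gaussian 1))
     = (\<integral>\<^sup>+W. (\<Prod>i\<in>S. ennreal (exp (a * (cmod (W i))\<^sup>2))) \<partial>PiM S (\<lambda>_. complex_gaussian 1))"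
    by (intro nn_integral_cong prod_ennreal[symmetric]) simp
  also have "\<dots> = (\<Prod>i\<in>S. \<integral>\<^sup>+w. ennreal (exp (a * (cmod w)\<^sup>2)) \<partial>complex_gaussian 1)"
    by (rule product_nn_integral_prod) (auto simp: assms)
  also have "\<dots> = ennreal ((1 / (1 - a)) ^ card S)"
    using assms by (simp add: complex_gaussian_mgf_sq prod_ennreal ennreal_power)
  finally show ?thesis .
qed

lemma gaussian_matrix_mgf_col_energy:
  assumes M: "M > 0" and S: "S \<subseteq> {0..<n}" and lam: "lam \<ge> 0"
    and small: "lam * (\<Sum>j<M. (cmod (y j))\<^sup>2) / M < 1"
  shows "(\<integral>\<^sup>+\<Phi>. ennreal (exp (lam * (\<Sum>i\<in>S. (cmod (col_inner M y \<Phi> i))\<^sup>2))) \<partial>gaussian_matrix M n)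
       = ennreal ((1 / (1 - lam * (\<Sum>j<M. (cmod (y j))\<^sup>2) / M)) ^ card S)"
proof -
  define r where "r = complex_of_real (2 * sqrt lam)"
  define GM where "GM = gaussian_matrix M n"
  define P where "P = PiM S (\<lambda>_. complex_gaussian 1)"
  define F where "F = (\<lambda>\<Phi> W. \<Prod>i\<in>S. ennreal (exp (Re (r * col_inner M y \<Phi> i * cnj (W i)))))"
  have finS: "finite S" using S finite_subset by blast
  have psP: "prob_space P"
    unfolding P_def by (intro prob_space_PiM prob_space_complex_gaussian) simp
  interpret pair_sigma_finite GM P
    by (simp add: pair_sigma_finite_def prob_space_imp_sigma_finite psP GM_def
        prob_space_gaussian_matrix M)
  have [measurable]: "i \<in> S \<Longrightarrow> (\<lambda>W. W i) \<in> borel_measurable P" for i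
  proof -
    assume "i \<in> S"
    then have "(\<lambda>W. W i) \<in> measurable P (complex_gaussian 1)"
      unfolding P_def by (rule measurable_component_singleton)
    then show ?thesis by (subst (asm) measurable_cong_sets[OF refl sets_complex_gaussian])
  qed
  have [measurable]: "i \<in> S \<Longrightarrow> (\<lambda>\<Phi>. col_inner M y \<Phi> i) \<in> borel_measurable GM" for i
    using S unfolding GM_def by auto
  have F_measurable: "case_prod F \<in> borel_measurable (GM \<Otimes>\<^sub>M P)"
    unfolding F_def case_prod_beta' by (intro borel_measurable_prod_ennreal) measurable
  have inner: "ennreal (exp (lam * (\<Sum>i\<in>S. (cmod (col_inner M y \<Phi> i))\<^sup>2))) = (\<integral>\<^sup>+W. F \<Phi> W \<partial>P)" for \<Phi>
    unfolding F_def P_def r_def by (rule exp_sum_cmod_sq_eq_gaussian_average[OF finS lam])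
  have r_sq: "(cmod r)\<^sup>2 / 4 = lam" unfolding r_def using lam by (simp add: power_mult_distrib)
  have outer: "(\<integral>\<^sup>+\<Phi>. F \<Phi> W \<partial>GM)
      = ennreal (\<Prod>i\<in>S. exp (lam * (\<Sum>j<M. (cmod (y j))\<^sup>2) / M * (cmod (W i))\<^sup>2))" for W
    unfolding F_def GM_def using gaussian_matrix_mgf_linear[OF M S, of r y W] by (simp add: r_sq)
  have "(\<integral>\<^sup>+\<Phi>. ennreal (exp (lam * (\<Sum>i\<in>S. (cmod (col_inner M y \<Phi> i))\<^sup>2))) \<partial>GM)
      = (\<integral>\<^sup>+\<Phi>. (\<integral>\<^sup>+W. F \<Phi> W \<partial>P) \<partial>GM)"
    by (simp add: inner)
  also have "\<dots> = (\<integral>\<^sup>+W. (\<integral>\<^sup>+\<Phi>. F \<Phi> W \<partial>GM) \<partial>P)"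
    by (rule Fubini'[OF F_measurable, symmetric])
  also have "\<dots> = ennreal ((1 / (1 - lam * (\<Sum>j<M. (cmod (y j))\<^sup>2) / M)) ^ card S)"
    unfolding outer P_def by (rule product_complex_gaussian_mgf_sq[OF finS small])
  finally show ?thesis unfolding GM_def .
qed

lemma gaussian_matrix_col_energy_tail:
  assumes M: "M > 0" and S: "S \<subseteq> {0..<n}" and lam: "lam > 0"
    and small: "lam * (\<Sum>j<M. (cmod (y j))\<^sup>2) / M < 1"
  shows "emeasure (gaussian_matrix M n)
      {\<Phi> \<in> space (gaussian_matrix M n). t \<le> (\<Sum>i\<in>S. (cmod (col_inner M y \<Phi> i))\<^sup>2)}
    \<le> ennreal (exp (- lam * t) * (1 / (1 - lam * (\<Sum>j<M. (cmod (y j))\<^sup>2) / M)) ^ card S)"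
proof -
  define GM where "GM = gaussian_matrix M n"
  define X where "X = (\<lambda>\<Phi>. \<Sum>i\<in>S. (cmod (col_inner M y \<Phi> i))\<^sup>2)"
  have [measurable]: "X \<in> borel_measurable GM" unfolding X_def GM_def using S by measurable
  have "t \<le> X \<Phi> \<longleftrightarrow> 1 \<le> ennreal (exp (- lam * t)) * ennreal (exp (lam * X \<Phi>))" for \<Phi>
  proof -
    have "ennreal (exp (- lam * t)) * ennreal (exp (lam * X \<Phi>)) = ennreal (exp (lam * (X \<Phi> - t)))"
      by (simp add: ennreal_mult[symmetric] mult_exp_exp algebra_simps)
    moreover have "1 \<le> exp (lam * (X \<Phi> - t)) \<longleftrightarrow> t \<le> X \<Phi>"
      using lam by (simp add: zero_le_mult_iff)
    ultimately show ?thesis by simp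
  qed
  then have "emeasure GM {\<Phi> \<in> space GM. t \<le> X \<Phi>}
      \<le> ennreal (exp (- lam * t)) * (\<integral>\<^sup>+\<Phi>. ennreal (exp (lam * X \<Phi>)) * indicator (space GM) \<Phi> \<partial>GM)"
    by (simp only:) (rule nn_integral_Markov_inequality, auto)
  also have "(\<integral>\<^sup>+\<Phi>. ennreal (exp (lam * X \<Phi>)) * indicator (space GM) \<Phi> \<partial>GM)
      = (\<integral>\<^sup>+\<Phi>. ennreal (exp (lam * X \<Phi>)) \<partial>GM)"
    by (intro nn_integral_cong) auto
  also have "\<dots> = ennreal ((1 / (1 - lam * (\<Sum>j<M. (cmod (y j))\<^sup>2) / M)) ^ card S)"
    unfolding GM_def X_def using assms by (intro gaussian_matrix_mgf_col_energy) auto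
  finally show ?thesis
    unfolding GM_def X_def using small by (simp add: ennreal_mult)
qed

section \<open>Norms of vectors and of their coefficients\<close>

text \<open>Vectors of \<open>\<complex>\<^sup>M\<close> are functions \<open>nat \<Rightarrow> complex\<close> of which only the first \<open>M\<close> values matter.\<close>

definition vec_norm :: "nat \<Rightarrow> (nat \<Rightarrow> complex) \<Rightarrow> real" where
  "vec_norm M x = L2_set (\<lambda>j. cmod (x j)) {..<M}"

definition coeff_norm :: "nat \<Rightarrow> nat set \<Rightarrow> (nat \<times> nat \<Rightarrow> complex) \<Rightarrow> (nat \<Rightarrow> complex) \<Rightarrow> real" where
  "coeff_norm M S \<Phi> x = L2_set (\<lambda>i. cmod (col_inner M x \<Phi> i)) S"

lemma vec_norm_nonneg: "vec_norm M x \<ge> 0"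
  unfolding vec_norm_def by simp

lemma coeff_norm_nonneg: "coeff_norm M S \<Phi> x \<ge> 0"
  unfolding coeff_norm_def by simp

lemma vec_norm_sq: "(vec_norm M x)\<^sup>2 = (\<Sum>j<M. (cmod (x j))\<^sup>2)"
  unfolding vec_norm_def L2_set_def by (simp add: sum_nonneg)

lemma coeff_norm_sq: "finite S \<Longrightarrow> (coeff_norm M S \<Phi> x)\<^sup>2 = (\<Sum>i\<in>S. (cmod (col_inner M x \<Phi> i))\<^sup>2)"
  unfolding coeff_norm_def L2_set_def by (simp add: sum_nonneg)

lemma vec_norm_eq_1_iff: "vec_norm M x = 1 \<longleftrightarrow> (\<Sum>j<M. (cmod (x j))\<^sup>2) = 1"
  unfolding vec_norm_def L2_set_def by simp

lemma vec_norm_triangle: "vec_norm M (\<lambda>j. a j + b j) \<le> vec_norm M a + vec_norm M b"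
proof -
  have "vec_norm M (\<lambda>j. a j + b j) \<le> L2_set (\<lambda>j. cmod (a j) + cmod (b j)) {..<M}"
    unfolding vec_norm_def by (rule L2_set_mono) (auto intro: norm_triangle_ineq)
  also have "\<dots> \<le> vec_norm M a + vec_norm M b"
    unfolding vec_norm_def by (rule L2_set_triangle_ineq)
  finally show ?thesis .
qed

lemma vec_norm_minus_commute: "vec_norm M (\<lambda>j. x j - y j) = vec_norm M (\<lambda>j. y j - x j)"
  unfolding vec_norm_def by (simp add: norm_minus_commute)

lemma vec_norm_scale: "vec_norm M (\<lambda>j. complex_of_real c * x j) = \<bar>c\<bar> * vec_norm M x"
  unfolding vec_norm_def by (simp add: L2_set_right_distrib norm_mult)

lemma col_inner_diff: "col_inner M (\<lambda>j. x j - y j) \<Phi> i = col_inner M x \<Phi> i - col_inner M y \<Phi> i"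
  unfolding col_inner_def by (simp add: sum_subtractf[symmetric] algebra_simps)

lemma col_inner_scale: "col_inner M (\<lambda>j. c * x j) \<Phi> i = c * col_inner M x \<Phi> i"
  unfolding col_inner_def by (simp add: sum_distrib_left mult_ac)

lemma norm_col_inner_le:
  "cmod (col_inner M x \<Phi> i) \<le> vec_norm M x * L2_set (\<lambda>j. cmod (\<Phi> (j, i))) {..<M}"
proof -
  have "cmod (col_inner M x \<Phi> i) \<le> (\<Sum>j<M. cmod (x j * cnj (\<Phi> (j, i))))"
    unfolding col_inner_def by (rule norm_sum)
  also have "\<dots> = (\<Sum>j<M. \<bar>cmod (x j)\<bar> * \<bar>cmod (\<Phi> (j, i))\<bar>)" by (simp add: norm_mult)
  also have "\<dots> \<le> vec_norm M x * L2_set (\<lambda>j. cmod (\<Phi> (j, i))) {..<M}"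
    unfolding vec_norm_def by (rule L2_set_mult_ineq)
  finally show ?thesis .
qed

lemma coeff_norm_le:
  "coeff_norm M S \<Phi> x \<le> vec_norm M x * L2_set (\<lambda>i. L2_set (\<lambda>j. cmod (\<Phi> (j, i))) {..<M}) S"
  unfolding coeff_norm_def
  by (subst L2_set_right_distrib)
    (auto intro!: L2_set_mono norm_col_inner_le[unfolded vec_norm_def] simp: vec_norm_def)

lemma coeff_norm_triangle:
  "coeff_norm M S \<Phi> x \<le> coeff_norm M S \<Phi> y + coeff_norm M S \<Phi> (\<lambda>j. x j - y j)"
proof -
  have "coeff_norm M S \<Phi> x
      \<le> L2_set (\<lambda>i. cmod (col_inner M y \<Phi> i) + cmod (col_inner M (\<lambda>j. x j - y j) \<Phi> i)) S"
    unfolding coeff_norm_def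
  proof (rule L2_set_mono)
    fix i
    have "col_inner M x \<Phi> i = col_inner M y \<Phi> i + col_inner M (\<lambda>j. x j - y j) \<Phi> i"
      by (simp add: col_inner_diff)
    then show "cmod (col_inner M x \<Phi> i)
        \<le> cmod (col_inner M y \<Phi> i) + cmod (col_inner M (\<lambda>j. x j - y j) \<Phi> i)"
      by (metis norm_triangle_ineq)
  qed simp
  also have "\<dots> \<le> coeff_norm M S \<Phi> y + coeff_norm M S \<Phi> (\<lambda>j. x j - y j)"
    unfolding coeff_norm_def by (rule L2_set_triangle_ineq)
  finally show ?thesis .
qed

lemma coeff_norm_scale:
  "coeff_norm M S \<Phi> (\<lambda>j. complex_of_real c * x j) = \<bar>c\<bar> * coeff_norm M S \<Phi> x"
  unfolding coeff_norm_def col_inner_scale by (simp add: L2_set_right_distrib norm_mult)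

lemma coeff_norm_le_by_homogeneity:
  assumes "\<And>u. vec_norm M u = 1 \<Longrightarrow> coeff_norm M S \<Phi> u \<le> B"
  shows "coeff_norm M S \<Phi> v \<le> vec_norm M v * B"
proof (cases "vec_norm M v = 0")
  case True
  then show ?thesis using coeff_norm_le[of M S \<Phi> v] coeff_norm_nonneg[of M S \<Phi> v] by simp
next
  case False
  define d where "d = vec_norm M v"
  have d_pos: "d > 0" using False vec_norm_nonneg[of M v] unfolding d_def by simp
  define w where "w = (\<lambda>j. complex_of_real (1/d) * v j)"
  have v_eq: "v = (\<lambda>j. complex_of_real d * w j)" using d_pos unfolding w_def by auto
  have "vec_norm M w = 1" unfolding w_def vec_norm_scale using d_pos by (simp add: d_def)
  then have "coeff_norm M S \<Phi> w \<le> B" by (rule assms)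
  then show ?thesis
    using d_pos by (subst (1) v_eq, unfold coeff_norm_scale) (simp add: d_def mult_left_mono)
qed

text \<open>The standard net argument: the supremum \<open>\<Lambda>\<close> of \<open>coeff_norm\<close> over the sphere satisfies
  \<open>\<Lambda> \<le> a (1 - \<epsilon>) + \<epsilon> \<Lambda>\<close> when \<open>a (1 - \<epsilon>)\<close> bounds it on an \<open>\<epsilon>\<close>-net.\<close>

lemma coeff_norm_net_witness:
  assumes eps: "0 \<le> \<epsilon>" "\<epsilon> < 1"
    and net: "\<And>x. vec_norm M x = 1 \<Longrightarrow> \<exists>y\<in>N. vec_norm M (\<lambda>j. x j - y j) \<le> \<epsilon>"
    and x: "vec_norm M x = 1" and large: "coeff_norm M S \<Phi> x > a"
  shows "\<exists>y\<in>N. coeff_norm M S \<Phi> y > (1 - \<epsilon>) * a"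
proof (rule ccontr)
  assume "\<not> ?thesis"
  then have on_net: "\<And>y. y \<in> N \<Longrightarrow> coeff_norm M S \<Phi> y \<le> (1 - \<epsilon>) * a" by (simp add: not_less)
  define T where "T = (\<lambda>u. coeff_norm M S \<Phi> u) ` {u. vec_norm M u = 1}"
  define \<Lambda> where "\<Lambda> = Sup T"
  have "bdd_above T"
    unfolding T_def bdd_above_def using coeff_norm_le[of M S \<Phi>]
    by (intro exI[of _ "L2_set (\<lambda>i. L2_set (\<lambda>j. cmod (\<Phi> (j, i))) {..<M}) S"]) (auto, metis mult_1)
  then have le_\<Lambda>: "vec_norm M u = 1 \<Longrightarrow> coeff_norm M S \<Phi> u \<le> \<Lambda>" for u
    unfolding \<Lambda>_def by (intro cSup_upper) (auto simp: T_def)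
  have \<Lambda>_nonneg: "\<Lambda> \<ge> 0" using le_\<Lambda>[OF x] coeff_norm_nonneg[of M S \<Phi> x] by linarith
  have "\<Lambda> \<le> (1 - \<epsilon>) * a + \<epsilon> * \<Lambda>"
    unfolding \<Lambda>_def
  proof (rule cSup_least)
    show "T \<noteq> {}" using x unfolding T_def by auto
    fix t assume "t \<in> T"
    then obtain u where u: "vec_norm M u = 1" "t = coeff_norm M S \<Phi> u" unfolding T_def by auto
    obtain y where y: "y \<in> N" "vec_norm M (\<lambda>j. u j - y j) \<le> \<epsilon>" using net[OF u(1)] by auto
    have "t \<le> coeff_norm M S \<Phi> y + coeff_norm M S \<Phi> (\<lambda>j. u j - y j)"
      using u coeff_norm_triangle by simp
    also have "\<dots> \<le> (1 - \<epsilon>) * a + \<epsilon> * \<Lambda>"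
      using on_net[OF y(1)] coeff_norm_le_by_homogeneity[OF le_\<Lambda>, of "\<lambda>j. u j - y j"]
        mult_right_mono[OF y(2) \<Lambda>_nonneg] by linarith
    finally show "t \<le> (1 - \<epsilon>) * a + \<epsilon> * Sup T" unfolding \<Lambda>_def .
  qed
  then have "(1 - \<epsilon>) * \<Lambda> \<le> (1 - \<epsilon>) * a" by (simp add: algebra_simps)
  then have "\<Lambda> \<le> a" using eps by simp
  then show False using le_\<Lambda>[OF x] large by simp
qed

section \<open>A finite net of the unit sphere\<close>

definition grid_round :: "nat \<Rightarrow> nat \<Rightarrow> (nat \<Rightarrow> complex) \<Rightarrow> (nat \<Rightarrow> complex)" where
  "grid_round M L x = (\<lambda>j. if j < M
     then Complex (of_int \<lfloor>Re (x j) * L\<rfloor> / L) (of_int \<lfloor>Im (x j) * L\<rfloor> / L) else 0)"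

lemma floor_mult_div_approx:
  fixes t :: real
  assumes "L > (0::nat)"
  shows "\<bar>t - of_int \<lfloor>t * L\<rfloor> / L\<bar> \<le> 1 / L"
proof -
  have frac: "0 \<le> t * L - of_int \<lfloor>t * L\<rfloor>" "t * L - of_int \<lfloor>t * L\<rfloor> \<le> 1" by linarith+
  have "t - of_int \<lfloor>t * L\<rfloor> / L = (t * L - of_int \<lfloor>t * L\<rfloor>) / L"
    using assms by (simp add: field_simps)
  then show ?thesis using frac assms by (simp add: divide_right_mono)
qed

lemma vec_norm_grid_round_err:
  assumes "L > 0"
  shows "(vec_norm M (\<lambda>j. x j - grid_round M L x j))\<^sup>2 \<le> 2 * M / (real L)\<^sup>2"
proof -
  have "(cmod (x j - grid_round M L x j))\<^sup>2 \<le> 2 / (real L)\<^sup>2" if "j < M" for j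
  proof -
    have re: "\<bar>Re (x j - grid_round M L x j)\<bar> \<le> 1 / L"
      and im: "\<bar>Im (x j - grid_round M L x j)\<bar> \<le> 1 / L"
      using that floor_mult_div_approx[OF assms] by (simp_all add: grid_round_def)
    have "(Re (x j - grid_round M L x j))\<^sup>2 \<le> (1 / L)\<^sup>2" "(Im (x j - grid_round M L x j))\<^sup>2 \<le> (1 / L)\<^sup>2"
      using power_mono[OF re abs_ge_zero, of 2] power_mono[OF im abs_ge_zero, of 2] by simp_all
    then show ?thesis by (simp add: cmod_power2 power_divide)
  qed
  then have "(\<Sum>j<M. (cmod (x j - grid_round M L x j))\<^sup>2) \<le> (\<Sum>j<M. 2 / (real L)\<^sup>2)"
    by (intro sum_mono) auto
  then show ?thesis by (simp add: vec_norm_sq mult.commute)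
qed

lemma floor_mult_in_range:
  fixes t :: real
  assumes "\<bar>t\<bar> \<le> 1"
  shows "\<lfloor>t * L\<rfloor> \<in> {- int L..int L}"
proof -
  have "\<bar>t * L\<bar> \<le> real L" using assms by (simp add: abs_mult mult_left_le_one_le)
  then show ?thesis by (auto simp: le_floor_iff floor_le_iff abs_le_iff)
qed

lemma finite_card_grid_round_image:
  "finite (grid_round M L ` {x. vec_norm M x = 1})
    \<and> card (grid_round M L ` {x. vec_norm M x = 1}) \<le> (2 * L + 1) ^ (2 * M)"
proof -
  define grid where "grid = (\<lambda>(a, b). Complex (of_int a / L) (of_int b / L)) ` ({- int L..int L} \<times> {- int L..int L})"
  define extend where "extend = (\<lambda>f::nat \<Rightarrow> complex. \<lambda>j. if j < M then f j else 0)"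
  have fin_grid: "finite grid" unfolding grid_def by simp
  have card_grid: "card grid \<le> (2 * L + 1)\<^sup>2"
  proof -
    have "card grid \<le> card ({- int L..int L} \<times> {- int L..int L})"
      unfolding grid_def by (rule card_image_le) simp
    also have "\<dots> = (2 * L + 1)\<^sup>2"
    proof -
      have "card {- int L..int L} = 2 * L + 1" by simp
      then show ?thesis by (simp add: card_cartesian_product power2_eq_square)
    qed
    finally show ?thesis .
  qed
  have coord_le_1: "\<bar>Re (x j)\<bar> \<le> 1" "\<bar>Im (x j)\<bar> \<le> 1" if "vec_norm M x = 1" "j < M" for x j
  proof -
    have "cmod (x j) \<le> 1" using that unfolding vec_norm_def by (metis member_le_L2_set finite_lessThan
        lessThan_iff norm_ge_zero)
    then show "\<bar>Re (x j)\<bar> \<le> 1" "\<bar>Im (x j)\<bar> \<le> 1" using abs_Re_le_cmod abs_Im_le_cmod order.trans by blast+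
  qed
  have sub: "grid_round M L ` {x. vec_norm M x = 1} \<subseteq> extend ` (PiE {..<M} (\<lambda>_. grid))"
  proof
    fix z assume "z \<in> grid_round M L ` {x. vec_norm M x = 1}"
    then obtain x where x: "vec_norm M x = 1" "z = grid_round M L x" by auto
    define f where "f = restrict (\<lambda>j. Complex (of_int \<lfloor>Re (x j) * L\<rfloor> / L) (of_int \<lfloor>Im (x j) * L\<rfloor> / L)) {..<M}"
    have "f \<in> PiE {..<M} (\<lambda>_. grid)"
      unfolding f_def grid_def
      using floor_mult_in_range[OF coord_le_1(1)[OF x(1)]] floor_mult_in_range[OF coord_le_1(2)[OF x(1)]]
      by (auto intro!: image_eqI[where x="(\<lfloor>Re (x _) * L\<rfloor>, \<lfloor>Im (x _) * L\<rfloor>)"])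
    moreover have "z = extend f" unfolding x(2) extend_def f_def grid_round_def by auto
    ultimately show "z \<in> extend ` (PiE {..<M} (\<lambda>_. grid))" by blast
  qed
  have fin_PiE: "finite (PiE {..<M} (\<lambda>_. grid))" using fin_grid by (simp add: finite_PiE)
  have "card (grid_round M L ` {x. vec_norm M x = 1}) \<le> card (extend ` (PiE {..<M} (\<lambda>_. grid)))"
    by (rule card_mono) (use fin_PiE sub in auto)
  also have "\<dots> \<le> card (PiE {..<M} (\<lambda>_. grid))" by (rule card_image_le[OF fin_PiE])
  also have "\<dots> = card grid ^ M" by (simp add: card_PiE)
  also have "\<dots> \<le> ((2 * L + 1)\<^sup>2) ^ M" by (rule power_mono[OF card_grid]) simp
  also have "\<dots> = (2 * L + 1) ^ (2 * M)" by (simp add: power_mult)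
  finally show ?thesis using finite_subset[OF sub] fin_PiE by auto
qed

lemma unit_sphere_net:
  assumes "M > 0"
  obtains N where "finite N" "real (card N) \<le> (121 * real M) ^ (2 * M)"
    and "\<And>x. vec_norm M x = 1 \<Longrightarrow> \<exists>y\<in>N. vec_norm M (\<lambda>j. x j - y j) \<le> 1 / 40"
    and "\<And>y. y \<in> N \<Longrightarrow> (\<Sum>j<M. (cmod (y j))\<^sup>2) \<le> 11 / 10"
proof
  define L where "L = 60 * M"
  define N where "N = grid_round M L ` {x. vec_norm M x = 1}"
  show fin: "finite N"
    using finite_card_grid_round_image[of M L] unfolding N_def by simp
  have "real (card N) \<le> real ((2 * L + 1) ^ (2 * M))"
    using finite_card_grid_round_image[of M L] unfolding N_def of_nat_le_iff by simp
  also have "\<dots> = (120 * real M + 1) ^ (2 * M)" unfolding L_def by (simp add: add.commute)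
  also have "\<dots> \<le> (121 * real M) ^ (2 * M)" using assms by (intro power_mono) auto
  finally show "real (card N) \<le> (121 * real M) ^ (2 * M)" .
  have err: "vec_norm M (\<lambda>j. x j - grid_round M L x j) \<le> 1 / 40" for x
  proof -
    have "(vec_norm M (\<lambda>j. x j - grid_round M L x j))\<^sup>2 \<le> 2 * real M / (real L)\<^sup>2"
      by (rule vec_norm_grid_round_err) (use assms in \<open>simp add: L_def\<close>)
    also have "\<dots> = 1 / (1800 * real M)" unfolding L_def using assms by (simp add: power2_eq_square)
    also have "\<dots> \<le> (1 / 40)\<^sup>2" using assms by (simp add: field_simps)
    finally show ?thesis by (rule power2_le_imp_le) simp
  qed
  then show "\<And>x. vec_norm M x = 1 \<Longrightarrow> \<exists>y\<in>N. vec_norm M (\<lambda>j. x j - y j) \<le> 1 / 40"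
    unfolding N_def by blast
  fix y assume "y \<in> N"
  then obtain x where x: "vec_norm M x = 1" "y = grid_round M L x" unfolding N_def by auto
  have "vec_norm M y \<le> vec_norm M x + vec_norm M (\<lambda>j. y j - x j)"
    using vec_norm_triangle[of M x "\<lambda>j. y j - x j"] by simp
  also have "\<dots> \<le> 41 / 40" using err[of x] x by (simp add: vec_norm_minus_commute)
  finally have "(vec_norm M y)\<^sup>2 \<le> (41 / 40)\<^sup>2" by (intro power_mono vec_norm_nonneg)
  then show "(\<Sum>j<M. (cmod (y j))\<^sup>2) \<le> 11 / 10" unfolding vec_norm_sq by (simp add: power2_eq_square)
qed

section \<open>Measurability of the event\<close>

definition unit_scale :: "nat \<Rightarrow> (nat \<Rightarrow> complex) \<Rightarrow> (nat \<Rightarrow> complex)" where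
  "unit_scale M y = (\<lambda>j. complex_of_real (1 / vec_norm M y) * y j)"

lemma vec_norm_unit_scale: "vec_norm M y > 0 \<Longrightarrow> vec_norm M (unit_scale M y) = 1"
  unfolding unit_scale_def vec_norm_scale by simp

lemma grid_points_dense:
  assumes x: "vec_norm M x = 1" and r: "r > 0"
  shows "\<exists>m. \<exists>y\<in>grid_round M (Suc m) ` {x. vec_norm M x = 1}.
    0 < vec_norm M y \<and> vec_norm M (\<lambda>j. x j - unit_scale M y j) < r"
proof -
  define e0 where "e0 = min (r/2) (1/2)"
  have e0: "e0 > 0" unfolding e0_def using r by simp
  obtain L :: nat where L: "real L > sqrt (2 * M) / e0" using reals_Archimedean2 by blast
  have L_pos: "L > 0" using L e0 by (metis divide_nonneg_pos not_gr0 of_nat_0 order.strict_iff_not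
      real_sqrt_ge_zero zero_le_mult_iff zero_le_numeral of_nat_0_le_iff)
  have "sqrt (2 * M) < e0 * L" using L e0 by (simp add: field_simps)
  then have "(sqrt (2 * M))\<^sup>2 < (e0 * L)\<^sup>2" by (intro power_strict_mono) auto
  then have "2 * M / (real L)\<^sup>2 < e0\<^sup>2" using L_pos by (simp add: field_simps power_mult_distrib)
  define y where "y = grid_round M L x"
  define e where "e = vec_norm M (\<lambda>j. x j - y j)"
  have "e\<^sup>2 < e0\<^sup>2" using vec_norm_grid_round_err[OF L_pos, of M x] \<open>2 * M / (real L)\<^sup>2 < e0\<^sup>2\<close>
    unfolding e_def y_def by linarith
  then have e_lt: "e < e0" using e0 by (smt (verit) power_mono)
  have "vec_norm M x \<le> vec_norm M y + e"
    using vec_norm_triangle[of M y "\<lambda>j. x j - y j"] unfolding e_def by simp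
  moreover have "vec_norm M y \<le> vec_norm M x + e"
    using vec_norm_triangle[of M x "\<lambda>j. y j - x j"] vec_norm_minus_commute[of M x y]
    unfolding e_def by simp
  ultimately have y_near_1: "\<bar>vec_norm M y - 1\<bar> \<le> e" using x by simp
  have y_pos: "vec_norm M y > 0" using y_near_1 e_lt e0_def by (simp add: abs_le_iff)
  have "vec_norm M (\<lambda>j. y j - unit_scale M y j)
      = vec_norm M (\<lambda>j. complex_of_real (1 - 1 / vec_norm M y) * y j)"
    unfolding unit_scale_def by (simp add: algebra_simps)
  also have "\<dots> = \<bar>vec_norm M y - 1\<bar>" unfolding vec_norm_scale using y_pos
    by (simp add: abs_mult[symmetric] algebra_simps) (simp add: field_simps)
  finally have "vec_norm M (\<lambda>j. y j - unit_scale M y j) \<le> e" using y_near_1 by simp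
  moreover have "vec_norm M (\<lambda>j. x j - unit_scale M y j) \<le> e + vec_norm M (\<lambda>j. y j - unit_scale M y j)"
    using vec_norm_triangle[of M "\<lambda>j. x j - y j" "\<lambda>j. y j - unit_scale M y j"] unfolding e_def by simp
  ultimately have "vec_norm M (\<lambda>j. x j - unit_scale M y j) < r" using e_lt unfolding e0_def by simp
  moreover have "y \<in> grid_round M (Suc (L - 1)) ` {x. vec_norm M x = 1}"
    using x L_pos unfolding y_def by simp
  ultimately show ?thesis using y_pos by blast
qed

text \<open>Only finitely many columns are involved, so the count of large coefficients cannot drop
  under a small enough perturbation of \<open>x\<close>.\<close>

lemma card_large_coeffs_lower_semicontinuous:
  assumes c: "c \<ge> 0"
  obtains \<delta> where "\<delta> > 0"
    and "\<And>x'. vec_norm M (\<lambda>j. x j - x' j) < \<delta> \<Longrightarrow>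
      card {i \<in> {0..<n}. (cmod (col_inner M x \<Phi> i))\<^sup>2 > c}
      \<le> card {i \<in> {0..<n}. (cmod (col_inner M x' \<Phi> i))\<^sup>2 > c}"
proof
  define T where "T = {i \<in> {0..<n}. (cmod (col_inner M x \<Phi> i))\<^sup>2 > c}"
  define col_norm where "col_norm = (\<lambda>i. L2_set (\<lambda>j. cmod (\<Phi> (j, i))) {..<M})"
  define K where "K = 1 + (\<Sum>i<n. col_norm i)"
  define \<eta> where "\<eta> = Min (insert 1 ((\<lambda>i. cmod (col_inner M x \<Phi> i) - sqrt c) ` T))"
  have K_pos: "K > 0" unfolding K_def col_norm_def by (smt (verit) L2_set_nonneg sum_nonneg)
  have col_norm_le_K: "i < n \<Longrightarrow> col_norm i \<le> K" for i
    unfolding K_def using member_le_sum[of i "{..<n}" col_norm] by (auto simp: col_norm_def)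
  have fin_T: "finite T" unfolding T_def by simp
  have gap_pos: "i \<in> T \<Longrightarrow> cmod (col_inner M x \<Phi> i) - sqrt c > 0" for i
    using c unfolding T_def by (simp add: real_sqrt_less_iff real_less_lsqrt)
  have \<eta>_pos: "\<eta> > 0" unfolding \<eta>_def using fin_T gap_pos by (subst Min_gr_iff) auto
  have \<eta>_le_gap: "i \<in> T \<Longrightarrow> \<eta> \<le> cmod (col_inner M x \<Phi> i) - sqrt c" for i
    unfolding \<eta>_def using fin_T by (intro Min_le) auto
  show "\<eta> / K > 0" using \<eta>_pos K_pos by simp
  fix x' assume close: "vec_norm M (\<lambda>j. x j - x' j) < \<eta> / K"
  have "T \<subseteq> {i \<in> {0..<n}. (cmod (col_inner M x' \<Phi> i))\<^sup>2 > c}"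
  proof
    fix i assume iT: "i \<in> T"
    then have i: "i < n" unfolding T_def by simp
    have "cmod (col_inner M x \<Phi> i - col_inner M x' \<Phi> i) \<le> vec_norm M (\<lambda>j. x j - x' j) * col_norm i"
      unfolding col_inner_diff[symmetric] col_norm_def by (rule norm_col_inner_le)
    also have "\<dots> \<le> vec_norm M (\<lambda>j. x j - x' j) * K"
      using col_norm_le_K[OF i] by (intro mult_left_mono vec_norm_nonneg)
    also have "\<dots> < \<eta>" using close K_pos by (simp add: field_simps)
    finally have "cmod (col_inner M x' \<Phi> i) > sqrt c"
      using \<eta>_le_gap[OF iT] norm_triangle_ineq2[of "col_inner M x \<Phi> i" "col_inner M x' \<Phi> i"] by linarith
    then have "(sqrt c)\<^sup>2 < (cmod (col_inner M x' \<Phi> i))\<^sup>2" using c by (intro power_strict_mono) auto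
    then show "i \<in> {i \<in> {0..<n}. (cmod (col_inner M x' \<Phi> i))\<^sup>2 > c}" using c i by simp
  qed
  then show "card T \<le> card {i \<in> {0..<n}. (cmod (col_inner M x' \<Phi> i))\<^sup>2 > c}"
    by (intro card_mono) simp
qed

lemma pred_card_large_coeffs_less:
  "Measurable.pred (gaussian_matrix M n)
     (\<lambda>\<Phi>. real (card {i \<in> {0..<n}. (cmod (col_inner M x \<Phi> i))\<^sup>2 > c}) < b)"
proof -
  have count: "real (card {i \<in> {0..<n}. (cmod (col_inner M x \<Phi> i))\<^sup>2 > c})
      = (\<Sum>i\<in>{0..<n}. if (cmod (col_inner M x \<Phi> i))\<^sup>2 > c then 1 else 0)" for \<Phi>
  proof -
    have "card {i \<in> {0..<n}. (cmod (col_inner M x \<Phi> i))\<^sup>2 > c}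
        = (\<Sum>i\<in>{i \<in> {0..<n}. (cmod (col_inner M x \<Phi> i))\<^sup>2 > c}. 1)" by simp
    also have "\<dots> = (\<Sum>i\<in>{0..<n}. if (cmod (col_inner M x \<Phi> i))\<^sup>2 > c then 1 else 0)"
      by (rule sum.inter_filter) simp
    finally show ?thesis by (auto simp: of_nat_sum intro!: sum.cong)
  qed
  have "(\<lambda>\<Phi>. \<Sum>i\<in>{0..<n}. if (cmod (col_inner M x \<Phi> i))\<^sup>2 > c then 1 else 0::real)
      \<in> borel_measurable (gaussian_matrix M n)"
    by (intro borel_measurable_sum) measurable
  then show ?thesis unfolding count by (rule borel_measurable_pred_less) simp
qed

lemma sets_few_large_coeffs_event:
  assumes c: "c \<ge> 0"
  shows "{\<Phi> \<in> space (gaussian_matrix M n). \<forall>x. (\<Sum>j<M. (cmod (x j))\<^sup>2) = 1 \<longrightarrow>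
      real (card {i \<in> {0..<n}. (cmod (col_inner M x \<Phi> i))\<^sup>2 > c}) < b} \<in> sets (gaussian_matrix M n)"
proof -
  define GM where "GM = gaussian_matrix M n"
  define P where "P = (\<lambda>x \<Phi>. real (card {i \<in> {0..<n}. (cmod (col_inner M x \<Phi> i))\<^sup>2 > c}) < b)"
  define F where "F = (\<lambda>m. grid_round M (Suc m) ` {x. vec_norm M x = 1})"
  have approx: "P x \<Phi>" if all: "\<forall>m. \<forall>y\<in>F m. 0 < vec_norm M y \<longrightarrow> P (unit_scale M y) \<Phi>"
    and x: "vec_norm M x = 1" for x \<Phi>
  proof -
    obtain \<delta> where \<delta>: "\<delta> > 0" and mono: "\<And>x'. vec_norm M (\<lambda>j. x j - x' j) < \<delta> \<Longrightarrow>
        card {i \<in> {0..<n}. (cmod (col_inner M x \<Phi> i))\<^sup>2 > c}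
        \<le> card {i \<in> {0..<n}. (cmod (col_inner M x' \<Phi> i))\<^sup>2 > c}"
      using card_large_coeffs_lower_semicontinuous[OF c] by blast
    obtain m y where y: "y \<in> F m" "0 < vec_norm M y" "vec_norm M (\<lambda>j. x j - unit_scale M y j) < \<delta>"
      using grid_points_dense[OF x \<delta>] unfolding F_def by auto
    have "P (unit_scale M y) \<Phi>" using all y(1,2) by blast
    moreover have "card {i \<in> {0..<n}. (cmod (col_inner M x \<Phi> i))\<^sup>2 > c}
        \<le> card {i \<in> {0..<n}. (cmod (col_inner M (unit_scale M y) \<Phi> i))\<^sup>2 > c}"
      by (rule mono[OF y(3)])
    ultimately show "P x \<Phi>" unfolding P_def by linarith
  qed
  have eq: "{\<Phi> \<in> space GM. \<forall>x. (\<Sum>j<M. (cmod (x j))\<^sup>2) = 1 \<longrightarrow> P x \<Phi>}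
      = {\<Phi> \<in> space GM. \<forall>m. \<forall>y\<in>F m. 0 < vec_norm M y \<longrightarrow> P (unit_scale M y) \<Phi>}"
  proof (intro Collect_cong conj_cong refl iffI allI ballI impI)
    fix \<Phi> m y
    assume "\<forall>x. (\<Sum>j<M. (cmod (x j))\<^sup>2) = 1 \<longrightarrow> P x \<Phi>" "0 < vec_norm M y"
    then show "P (unit_scale M y) \<Phi>" using vec_norm_unit_scale vec_norm_eq_1_iff by metis
  next
    fix \<Phi> x
    assume "\<forall>m. \<forall>y\<in>F m. 0 < vec_norm M y \<longrightarrow> P (unit_scale M y) \<Phi>" "(\<Sum>j<M. (cmod (x j))\<^sup>2) = 1"
    then show "P x \<Phi>" using approx vec_norm_eq_1_iff by blast
  qed
  have fin: "finite (F m)" for m unfolding F_def using finite_card_grid_round_image by blast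
  have "Measurable.pred GM (\<lambda>\<Phi>. \<forall>m. \<forall>y\<in>F m. 0 < vec_norm M y \<longrightarrow> P (unit_scale M y) \<Phi>)"
  proof (intro pred_intros_countable(1) pred_intros_finite(3)[OF fin])
    fix m y
    show "Measurable.pred GM (\<lambda>\<Phi>. 0 < vec_norm M y \<longrightarrow> P (unit_scale M y) \<Phi>)"
      using pred_card_large_coeffs_less[where x="unit_scale M y"]
      by (cases "0 < vec_norm M y") (auto simp: pred_def GM_def P_def)
  qed
  then show ?thesis using eq unfolding pred_def GM_def P_def by simp
qed

section \<open>The union bound\<close>

lemma gaussian_matrix_net_event_bound:
  assumes M: "M > 0" and C: "C \<ge> 0" and S: "S \<subseteq> {0..<n}" "card S = k"
    and y: "(\<Sum>j<M. (cmod (y j))\<^sup>2) \<le> 11 / 10"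
  shows "measure (gaussian_matrix M n)
      {\<Phi> \<in> space (gaussian_matrix M n).
        (39 / 40)\<^sup>2 * real k * C / real M \<le> (\<Sum>i\<in>S. (cmod (col_inner M y \<Phi> i))\<^sup>2)}
    \<le> 2 ^ k * exp (- 3 * real k * C / 8)"
proof -
  interpret prob_space "gaussian_matrix M n" by (rule prob_space_gaussian_matrix[OF M])
  define t where "t = (39 / 40)\<^sup>2 * real k * C / real M"
  define \<rho> where "\<rho> = (\<Sum>j<M. (cmod (y j))\<^sup>2)"
  define lam where "lam = 5 * real M / 11"
  have lam_pos: "lam > 0" unfolding lam_def using M by simp
  have \<rho>_nonneg: "\<rho> \<ge> 0" unfolding \<rho>_def by (simp add: sum_nonneg)
  have lam_\<rho>: "lam * \<rho> / real M = 5 * \<rho> / 11" unfolding lam_def using M by simp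
  have small: "lam * \<rho> / real M < 1" unfolding lam_\<rho> using y \<rho>_def by simp
  have "exp (- lam * t) \<le> exp (- 3 * real k * C / 8)"
  proof -
    have "lam * t = (7605 / 17600) * (real k * C)"
      unfolding lam_def t_def using M by (simp add: power2_eq_square field_simps)
    moreover have "real k * C \<ge> 0" using C by simp
    ultimately show ?thesis by simp
  qed
  moreover have "(1 / (1 - lam * \<rho> / M)) ^ card S \<le> 2 ^ k"
  proof -
    have "1 / (1 - lam * \<rho> / M) \<le> 2" unfolding lam_\<rho> using \<rho>_nonneg y \<rho>_def by (simp add: field_simps)
    then show ?thesis unfolding S(2) using small by (intro power_mono) auto
  qed
  ultimately have bound: "exp (- lam * t) * (1 / (1 - lam * \<rho> / M)) ^ card S
      \<le> 2 ^ k * exp (- 3 * real k * C / 8)"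
    using small by (subst mult.commute) (intro mult_mono, auto)
  have "emeasure (gaussian_matrix M n)
      {\<Phi> \<in> space (gaussian_matrix M n). t \<le> (\<Sum>i\<in>S. (cmod (col_inner M y \<Phi> i))\<^sup>2)}
      \<le> ennreal (2 ^ k * exp (- 3 * real k * C / 8))"
    using gaussian_matrix_col_energy_tail[OF M S(1) lam_pos small[unfolded \<rho>_def], of t]
      ennreal_leI[OF bound] unfolding \<rho>_def by (rule order_trans)
  then show ?thesis unfolding t_def by (simp add: emeasure_eq_measure)
qed

lemma net_witness_of_many_large_coeffs:
  assumes M: "M > 0" and C: "C \<ge> 0"
    and net: "\<And>x. vec_norm M x = 1 \<Longrightarrow> \<exists>y\<in>N. vec_norm M (\<lambda>j. x j - y j) \<le> 1 / 40"
    and x: "vec_norm M x = 1" and k: "1 \<le> k"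
    "k \<le> card {i \<in> {0..<n}. (cmod (col_inner M x \<Phi> i))\<^sup>2 > C / real M}"
  shows "\<exists>y\<in>N. \<exists>S. S \<subseteq> {0..<n} \<and> card S = k \<and>
    (39 / 40)\<^sup>2 * real k * C / real M \<le> (\<Sum>i\<in>S. (cmod (col_inner M y \<Phi> i))\<^sup>2)"
proof -
  define T where "T = {i \<in> {0..<n}. (cmod (col_inner M x \<Phi> i))\<^sup>2 > C / real M}"
  obtain S where S: "S \<subseteq> T" "card S = k" "finite S"
    using obtain_subset_with_card_n[OF k(2)] unfolding T_def by metis
  have "(\<Sum>i\<in>S. C / real M) < (\<Sum>i\<in>S. (cmod (col_inner M x \<Phi> i))\<^sup>2)"
    using S k(1) unfolding T_def by (intro sum_strict_mono) auto
  then have "(sqrt (real k * C / real M))\<^sup>2 < (coeff_norm M S \<Phi> x)\<^sup>2"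
    using S C M by (simp add: coeff_norm_sq)
  then have "coeff_norm M S \<Phi> x > sqrt (real k * C / real M)"
    using coeff_norm_nonneg power_less_imp_less_base by blast
  then have "\<exists>y\<in>N. coeff_norm M S \<Phi> y > (1 - 1/40) * sqrt (real k * C / real M)"
    by (intro coeff_norm_net_witness[OF _ _ net x]) auto
  then obtain y where y: "y \<in> N" "coeff_norm M S \<Phi> y > (1 - 1/40) * sqrt (real k * C / real M)"
    by blast
  then have "((1 - 1/40) * sqrt (real k * C / real M))\<^sup>2 < (coeff_norm M S \<Phi> y)\<^sup>2"
    using C by (intro power_strict_mono) auto
  moreover have "((1 - 1/40) * sqrt (real k * C / real M))\<^sup>2 = (39 / 40)\<^sup>2 * real k * C / real M"
  proof -
    have "(sqrt (real k * C / real M))\<^sup>2 = real k * C / real M" using C by simp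
    then show ?thesis by (simp only: power_mult_distrib) simp
  qed
  ultimately have "(39 / 40)\<^sup>2 * real k * C / real M < (\<Sum>i\<in>S. (cmod (col_inner M y \<Phi> i))\<^sup>2)"
    using S by (simp add: coeff_norm_sq)
  moreover have "S \<subseteq> {0..<n}" using S(1) unfolding T_def by auto
  ultimately show ?thesis using y(1) S(2) by (auto intro!: bexI[of _ y] exI[of _ S])
qed

lemma pow_div_fact_le_exp:
  fixes x :: real
  assumes "x \<ge> 0"
  shows "x ^ k / fact k \<le> exp x"
proof -
  have "(\<Sum>n\<in>{k}. x ^ n /\<^sub>R fact n) \<le> (\<Sum>n. x ^ n /\<^sub>R fact n)"
    by (rule sum_le_suminf) (use assms summable_exp_generic[of x] in auto)
  then show ?thesis by (simp add: exp_def divide_inverse mult.commute)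
qed

lemma binomial_le_exp_mult_div_pow:
  assumes "k \<ge> 1"
  shows "real (n choose k) \<le> (exp 1 * n / k) ^ k"
proof -
  have k_pos: "real k > 0" using assms by simp
  have "real (n choose k) * fact k \<le> real n ^ k"
    using binomial_fact_pow[of n k] by (metis of_nat_fact of_nat_le_iff of_nat_mult of_nat_power)
  then have "real (n choose k) \<le> real n ^ k * (1 / fact k)" by (simp add: field_simps)
  also have "\<dots> \<le> real n ^ k * (exp (real k) / real k ^ k)"
    using pow_div_fact_le_exp[of "real k" k] k_pos by (intro mult_left_mono) (simp_all add: field_simps)
  also have "\<dots> = (exp 1 * n / k) ^ k"
    by (simp add: power_divide power_mult_distrib exp_of_nat_mult[symmetric])
  finally show ?thesis .
qed

lemma binomial_mult_tail_le_exp: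
  fixes C :: real
  assumes \<beta>: "3 * exp (- C / 8) \<le> 1" and k: "3 * exp (- C / 8) * n \<le> real k" "1 \<le> k"
  shows "real (n choose k) * 2 ^ k * exp (- 3 * real k * C / 8) \<le> exp (- real k)"
proof -
  define q where "q = exp 1 * n / k * 2 * exp (- 3 * C / 8)"
  have k_pos: "real k > 0" using k by simp
  have ratio: "real n * exp (- C / 8) / real k \<le> 1 / 3" using k k_pos by (simp add: field_simps)
  have "exp (- C / 8) ^ 2 \<le> (1 / 3) ^ 2" using \<beta> by (intro power_mono) auto
  moreover have "q = 2 * exp 1 * (real n * exp (- C / 8) / real k) * exp (- C / 8) ^ 2"
  proof -
    have "exp (- 3 * C / 8) = exp (- C / 8 + - C / 8 + - C / 8)" by simp
    then have "exp (- 3 * C / 8) = exp (- C / 8) * exp (- C / 8) * exp (- C / 8)" by (simp only: exp_add)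
    then show ?thesis unfolding q_def by (simp add: power2_eq_square)
  qed
  ultimately have "q \<le> 2 * 3 * (1 / 3) * (1 / 3) ^ 2"
    using ratio exp_le by (simp only:) (intro mult_mono, auto)
  also have "\<dots> \<le> exp (-1)" using exp_le by (simp add: exp_minus field_simps)
  finally have q_le: "q \<le> exp (-1)" .
  have "real (n choose k) * 2 ^ k * exp (- 3 * real k * C / 8)
      \<le> (exp 1 * n / k) ^ k * 2 ^ k * exp (- 3 * C / 8) ^ k"
    using binomial_le_exp_mult_div_pow[OF k(2), of n]
    by (simp add: exp_of_nat_mult[symmetric] mult_ac mult_right_mono)
  also have "\<dots> = q ^ k" unfolding q_def power_mult_distrib ..
  also have "\<dots> \<le> exp (-1) ^ k" using q_le unfolding q_def by (intro power_mono) auto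
  also have "\<dots> = exp (- real k)" by (simp add: exp_of_nat_mult[symmetric])
  finally show ?thesis .
qed

lemma net_size_mult_exp_le:
  assumes M: "real M \<ge> 50000" and k: "3 * real M * ln (real M) \<le> real k"
    and N: "cN \<le> (121 * real M) ^ (2 * M)"
  shows "cN * exp (- real k) \<le> exp (- real M)"
proof -
  have M_pos: "real M > 0" using M by simp
  have "cN * exp (- real k) \<le> (121 * real M) ^ (2 * M) * exp (- (3 * M * ln M))"
    using N k by (intro mult_mono) auto
  also have "(121 * real M) ^ (2 * M) = exp (2 * M * (ln 121 + ln M))"
  proof -
    have "(121 * real M) ^ (2 * M) = exp (ln (121 * real M)) ^ (2 * M)" using M_pos by simp
    also have "\<dots> = exp (real (2 * M) * ln (121 * real M))" by (rule exp_of_nat_mult[symmetric])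
    finally show ?thesis using M_pos by (simp add: ln_mult)
  qed
  also have "exp (2 * M * (ln 121 + ln M)) * exp (- (3 * M * ln M)) = exp (real M * (2 * ln 121 - ln M))"
    by (simp add: exp_add[symmetric] algebra_simps)
  also have "\<dots> \<le> exp (- real M)"
  proof -
    have "1 \<le> ln (3::real)" using exp_le by (subst ln_ge_iff) auto
    moreover have "ln ((121::real) * 121 * 3) \<le> ln (real M)" using M by (subst ln_le_cancel_iff) auto
    moreover have "ln ((121::real) * 121 * 3) = 2 * ln 121 + ln (3::real)"
      by (simp only: ln_mult_pos mult_pos_pos zero_less_numeral)
    ultimately have "2 * ln 121 - ln M \<le> -1" by linarith
    then have "real M * (2 * ln 121 - ln M) \<le> real M * (-1)" using M_pos by (intro mult_left_mono) auto
    then show ?thesis by simp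
  qed
  finally show ?thesis .
qed

lemma many_large_coeffs_measure_le:
  fixes C :: real
  assumes M: "real M \<ge> 50000" and C: "C \<ge> 0" and \<beta>: "3 * exp (- C / 8) \<le> 1"
    and k: "1 \<le> k" "3 * exp (- C / 8) * n \<le> real k" "3 * real M * ln (real M) \<le> real k"
    and B: "B \<in> sets (gaussian_matrix M n)"
      "B \<subseteq> {\<Phi>. \<exists>x. vec_norm M x = 1 \<and> k \<le> card {i \<in> {0..<n}. (cmod (col_inner M x \<Phi> i))\<^sup>2 > C / real M}}"
  shows "measure (gaussian_matrix M n) B \<le> exp (- real M)"
proof -
  define GM where "GM = gaussian_matrix M n"
  have M_pos: "M > 0" using M by simp
  interpret prob_space GM unfolding GM_def by (rule prob_space_gaussian_matrix[OF M_pos])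
  obtain N where N: "finite N" "real (card N) \<le> (121 * real M) ^ (2 * M)"
    and net: "\<And>x. vec_norm M x = 1 \<Longrightarrow> \<exists>y\<in>N. vec_norm M (\<lambda>j. x j - y j) \<le> 1 / 40"
    and N_bounded: "\<And>y. y \<in> N \<Longrightarrow> (\<Sum>j<M. (cmod (y j))\<^sup>2) \<le> 11 / 10"
    using unit_sphere_net[OF M_pos] by blast
  define Sk where "Sk = {S. S \<subseteq> {0..<n} \<and> card S = k}"
  define E where "E = (\<lambda>(y, S). {\<Phi> \<in> space GM.
    (39 / 40)\<^sup>2 * real k * C / real M \<le> (\<Sum>i\<in>S. (cmod (col_inner M y \<Phi> i))\<^sup>2)})"
  have fin_Sk: "finite Sk" unfolding Sk_def by (rule finite_subset[of _ "Pow {0..<n}"]) auto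
  have card_Sk: "card Sk = n choose k" unfolding Sk_def using n_subsets[of "{0..<n}" k] by simp
  have E_sets: "E p \<in> sets GM" if "p \<in> N \<times> Sk" for p
  proof -
    have [measurable]: "(\<lambda>\<Phi>. \<Sum>i\<in>snd p. (cmod (col_inner M (fst p) \<Phi> i))\<^sup>2) \<in> borel_measurable GM"
      using that unfolding GM_def Sk_def by (intro borel_measurable_col_energy) auto
    show ?thesis unfolding E_def case_prod_beta by measurable
  qed
  have cover: "B \<subseteq> (\<Union>p\<in>N \<times> Sk. E p)"
  proof
    fix \<Phi> assume "\<Phi> \<in> B"
    then obtain x where "vec_norm M x = 1"
        "k \<le> card {i \<in> {0..<n}. (cmod (col_inner M x \<Phi> i))\<^sup>2 > C / real M}"
      using B(2) by blast
    then obtain y S where "y \<in> N" "S \<in> Sk"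
        "(39 / 40)\<^sup>2 * real k * C / real M \<le> (\<Sum>i\<in>S. (cmod (col_inner M y \<Phi> i))\<^sup>2)"
      using net_witness_of_many_large_coeffs[OF M_pos C net _ k(1)] unfolding Sk_def by blast
    moreover have "\<Phi> \<in> space GM" using sets.sets_into_space[OF B(1)] \<open>\<Phi> \<in> B\<close> unfolding GM_def by blast
    ultimately show "\<Phi> \<in> (\<Union>p\<in>N \<times> Sk. E p)" unfolding E_def by blast
  qed
  have "measure GM B \<le> measure GM (\<Union>p\<in>N \<times> Sk. E p)"
    using cover E_sets fin_Sk N(1) by (intro finite_measure_mono) (auto intro!: sets.finite_UN)
  also have "\<dots> \<le> (\<Sum>p\<in>N \<times> Sk. measure GM (E p))"
    using E_sets fin_Sk N(1) by (intro finite_measure_subadditive_finite) auto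
  also have "\<dots> \<le> (\<Sum>p\<in>N \<times> Sk. 2 ^ k * exp (- 3 * real k * C / 8))"
  proof (rule sum_mono)
    fix p assume "p \<in> N \<times> Sk"
    then obtain y S where "p = (y, S)" "y \<in> N" "S \<subseteq> {0..<n}" "card S = k" unfolding Sk_def by auto
    then show "measure GM (E p) \<le> 2 ^ k * exp (- 3 * real k * C / 8)"
      unfolding E_def GM_def using gaussian_matrix_net_event_bound[OF M_pos C] N_bounded by simp
  qed
  also have "\<dots> = real (card N) * (real (n choose k) * 2 ^ k * exp (- 3 * real k * C / 8))"
    by (simp add: card_cartesian_product card_Sk)
  also have "\<dots> \<le> real (card N) * exp (- real k)"
    by (intro mult_left_mono binomial_mult_tail_le_exp[OF \<beta> k(2,1)]) simp
  also have "\<dots> \<le> exp (- real M)" by (rule net_size_mult_exp_le[OF M k(3) N(2)])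
  finally show ?thesis unfolding GM_def .
qed

lemma few_large_coeffs_probability:
  fixes C :: real
  assumes C: "C > 0" and M: "real M \<ge> 50000" and n: "real n \<ge> exp (C / 8) * real M * ln (real M)"
  shows "measure (gaussian_matrix M n)
      {Phi \<in> space (gaussian_matrix M n). \<forall>x :: nat \<Rightarrow> complex. (\<Sum>j<M. (cmod (x j))\<^sup>2) = 1 \<longrightarrow>
        real (card {i \<in> {0..<n}. (cmod (col_inner M x Phi i))\<^sup>2 > C / real M}) < 3 * exp (- C / 8) * real n}
    \<ge> 1 - exp (- real M)"
proof -
  define GM where "GM = gaussian_matrix M n"
  define \<beta> where "\<beta> = 3 * exp (- C / 8)"
  define G where "G = {Phi \<in> space GM. \<forall>x :: nat \<Rightarrow> complex. (\<Sum>j<M. (cmod (x j))\<^sup>2) = 1 \<longrightarrow>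
    real (card {i \<in> {0..<n}. (cmod (col_inner M x Phi i))\<^sup>2 > C / real M}) < \<beta> * real n}"
  have M_pos: "M > 0" using M by simp
  interpret prob_space GM unfolding GM_def by (rule prob_space_gaussian_matrix[OF M_pos])
  have "exp (C / 8) * real M * ln (real M) > 0" using M by simp
  then have n_pos: "real n > 0" using n by linarith
  have G_sets: "G \<in> sets GM" unfolding G_def GM_def using C by (intro sets_few_large_coeffs_event) simp
  have "measure GM (space GM - G) \<le> exp (- real M)"
  proof (cases "\<beta> \<le> 1")
    case True
    define k where "k = nat \<lceil>\<beta> * real n\<rceil>"
    have k_ge: "real k \<ge> \<beta> * real n" unfolding k_def by linarith
    have "\<beta> * real n > 0" using n_pos by (simp add: \<beta>_def)
    then have k_pos: "1 \<le> k" unfolding k_def by linarith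
    have "exp (- C / 8) * exp (C / 8) = 1" by (simp add: mult_exp_exp)
    then have "3 * real M * ln (real M) = \<beta> * (exp (C / 8) * real M * ln (real M))"
      unfolding \<beta>_def by (simp only: mult_ac)
    also have "\<dots> \<le> \<beta> * real n" using n by (intro mult_left_mono) (simp_all add: \<beta>_def)
    finally have "3 * real M * ln (real M) \<le> real k" using k_ge by linarith
    moreover have "space GM - G \<subseteq> {\<Phi>. \<exists>x. vec_norm M x = 1 \<and>
        k \<le> card {i \<in> {0..<n}. (cmod (col_inner M x \<Phi> i))\<^sup>2 > C / real M}}"
    proof
      fix \<Phi> assume "\<Phi> \<in> space GM - G"
      then obtain x where x: "(\<Sum>j<M. (cmod (x j))\<^sup>2) = 1"
        and "\<beta> * real n \<le> real (card {i \<in> {0..<n}. (cmod (col_inner M x \<Phi> i))\<^sup>2 > C / real M})"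
        unfolding G_def by auto
      then have "k \<le> card {i \<in> {0..<n}. (cmod (col_inner M x \<Phi> i))\<^sup>2 > C / real M}"
        unfolding k_def by (simp add: nat_le_iff ceiling_le_iff)
      then show "\<Phi> \<in> {\<Phi>. \<exists>x. vec_norm M x = 1 \<and>
          k \<le> card {i \<in> {0..<n}. (cmod (col_inner M x \<Phi> i))\<^sup>2 > C / real M}}"
        using x vec_norm_eq_1_iff by blast
    qed
    ultimately show ?thesis
      using True C k_ge k_pos G_sets unfolding GM_def \<beta>_def
      by (intro many_large_coeffs_measure_le[OF M]) auto
  next
    case False
    have "real (card {i \<in> {0..<n}. (cmod (col_inner M x \<Phi> i))\<^sup>2 > C / real M}) < \<beta> * real n" for x \<Phi>
    proof -
      have "card {i \<in> {0..<n}. (cmod (col_inner M x \<Phi> i))\<^sup>2 > C / real M} \<le> card {0..<n}"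
        by (intro card_mono) auto
      moreover have "real n < \<beta> * real n" using False n_pos by simp
      ultimately show ?thesis by simp
    qed
    then have "G = space GM" unfolding G_def by auto
    then show ?thesis by simp
  qed
  then show ?thesis
    using finite_measure_compl[OF G_sets] prob_space unfolding GM_def G_def \<beta>_def by simp
qed

theorem lemma6p10:
  fixes C :: real
  assumes "C > 0"
  shows "\<exists>c0 c1. c0 > 0 \<and> c1 > 0 \<and>
    (\<forall>M n. M > 0 \<longrightarrow> real n \<ge> exp (C / 8) * real M * ln (real M) \<longrightarrow>
       measure (gaussian_matrix M n)
         {Phi \<in> space (gaussian_matrix M n).
            \<forall>x :: nat \<Rightarrow> complex. (\<Sum>j<M. (cmod (x j))\<^sup>2) = 1 \<longrightarrow>
              real (card {i \<in> {0..<n}. (cmod (col_inner M x Phi i))\<^sup>2 > C / real M})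
                < 3 * exp (- C / 8) * real n}
       \<ge> 1 - c0 * exp (- c1 * real M))"
proof -
  have "measure (gaussian_matrix M n)
         {Phi \<in> space (gaussian_matrix M n).
            \<forall>x :: nat \<Rightarrow> complex. (\<Sum>j<M. (cmod (x j))\<^sup>2) = 1 \<longrightarrow>
              real (card {i \<in> {0..<n}. (cmod (col_inner M x Phi i))\<^sup>2 > C / real M})
                < 3 * exp (- C / 8) * real n}
       \<ge> 1 - exp 50000 * exp (- real M)"
    if n: "real n \<ge> exp (C / 8) * real M * ln (real M)" for M n :: nat
  proof (cases "real M \<ge> 50000")
    case True
    have "exp (- real M) \<le> exp 50000 * exp (- real M)" by simp
    then show ?thesis using few_large_coeffs_probability[OF assms True n] by linarith
  next
    case False
    then have "exp 50000 * exp (- real M) \<ge> 1" by (simp add: mult_exp_exp)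
    then have "1 - exp 50000 * exp (- real M) \<le> 0" by simp
    then show ?thesis by (rule order_trans) (rule measure_nonneg)
  qed
  then show ?thesis by (intro exI[of _ "exp 50000"] exI[of _ 1]) simp
qed

end
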